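(* Assume $d\ge2$. Then $a^*_{d-2}+a^*_{d-1}=a^*_{d-1}+a^*_d$ if and only if $r=s$.
   Context: Fix an integer $d\ge0$ and $r,s\in(-1,\infty)$. Write $(x)_i=x(x+1)\cdots(x+i-1)$, $(x)_0=1$. For $0\le i\le d$ put $\theta^*_i=i$. Put $b^*_i=\frac{(d-i)(i-d-s)(2d-2i+r+s+2)_i}{(2d-2i+r+s)_{i+1}}$ ($0\le i\le d-1$), $c^*_i=\frac{i(i-d-r-1)(d-i+r+s+1)_{d-i}}{(d-i+r+s+2)_{d-i+1}}$ ($1\le i\le d$), $b^*_d=c^*_0=0$, and $a^*_i=\theta^*_0-b^*_i-c^*_i$ for $0\le i\le d$. *)

theory Defs
  imports Complex_Main
begin

text \<open>(x)_i is the rising factorial, i.e. the library's pochhammer x i.\<close>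

definition thetastar :: "nat \<Rightarrow> real" where
  "thetastar i = real i"

definition bstar :: "nat \<Rightarrow> real \<Rightarrow> real \<Rightarrow> nat \<Rightarrow> real" where
  "bstar d r s i =
     (if i < d then
        (real d - real i) * (real i - real d - s)
          * pochhammer (2 * real d - 2 * real i + r + s + 2) i
          / pochhammer (2 * real d - 2 * real i + r + s) (i + 1)
      else 0)"

definition cstar :: "nat \<Rightarrow> real \<Rightarrow> real \<Rightarrow> nat \<Rightarrow> real" where
  "cstar d r s i =
     (if i = 0 then 0 else
        real i * (real i - real d - r - 1)
          * pochhammer (real d - real i + r + s + 1) (d - i)
          / pochhammer (real d - real i + r + s + 2) (d - i + 1))"

definition astar :: "nat \<Rightarrow> real \<Rightarrow> real \<Rightarrow> nat \<Rightarrow> real" where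
  "astar d r s i = thetastar 0 - bstar d r s i - cstar d r s i"

end

theory Submission
  imports Defs
begin

text \<open>Because \<open>b*_d = 0\<close> and \<open>\<theta>*_0 = 0\<close>, the equation says \<open>b*_(d-2) + c*_(d-2) = c*_d\<close>.
  The Pochhammer quotients in these three numbers collapse to rational functions of
  \<open>d\<close> and \<open>t = r + s\<close>, and over the common denominator the difference of the two sides
  is \<open>2 (r - s) (t + 3) (t + 5) (2 d + t + 2)\<close>; as \<open>t > -2\<close>, all factors but \<open>r - s\<close>
  are positive.\<close>

lemma pochhammer_shift_arg:
  "a * pochhammer (a + 1) n = (a + of_nat n) * pochhammer a n"
  by (metis pochhammer_rec pochhammer_rec')

lemma bstar_second_last:
  fixes n :: nat and r s :: real
  assumes "r + s > -2"
  shows "bstar (n + 2) r s n = -2 * (2 + s) * (real n + 5 + r + s) / ((4 + r + s) * (5 + r + s))"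
proof -
  define t where "t = r + s"
  have pos: "5 + t > 0" "pochhammer (5 + t) n > 0"
    using assms by (auto simp: t_def intro!: pochhammer_pos)
  have denom: "pochhammer (4 + t) (n + 1) = (4 + t) * pochhammer (5 + t) n"
    by (simp add: pochhammer_rec algebra_simps)
  have numer: "(5 + t) * pochhammer (6 + t) n = (5 + t + real n) * pochhammer (5 + t) n"
    using pochhammer_shift_arg[of "5 + t" n] by (simp add: algebra_simps)
  have "bstar (n + 2) r s n = -2 * (2 + s) * pochhammer (6 + t) n / ((4 + t) * pochhammer (5 + t) n)"
  proof -
    have arg: "2 * real (n + 2) - 2 * real n + r + s + 2 = 6 + t"
         "2 * real (n + 2) - 2 * real n + r + s = 4 + t"
         "real n - real (n + 2) - s = - (2 + s)"
      by (simp_all add: t_def)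
    show ?thesis
      unfolding bstar_def arg using denom by simp
  qed
  also have "\<dots> = -2 * (2 + s) * ((5 + t) * pochhammer (6 + t) n)
                    / ((4 + t) * (5 + t) * pochhammer (5 + t) n)"
    using pos(1) by simp
  also have "\<dots> = -2 * (2 + s) * (real n + 5 + t) / ((4 + t) * (5 + t))"
    unfolding numer using pos(2) by (simp add: ac_simps)
  finally show ?thesis by (simp add: t_def add.assoc)
qed

lemma cstar_second_last:
  fixes n :: nat and r s :: real
  assumes "r + s > -2"
  shows "cstar (n + 2) r s n = - real n * (3 + r) * (3 + r + s) / ((5 + r + s) * (6 + r + s))"
proof (cases "n = 0")
  case True
  then show ?thesis by (simp add: cstar_def)
next
  case False
  define t where "t = r + s"
  have arg: "real (n + 2) - real n + r + s + 1 = 3 + t"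
            "real (n + 2) - real n + r + s + 2 = 4 + t"
            "real n - real (n + 2) - r - 1 = - (3 + r)"
            "n + 2 - n = 2"
    by (simp_all add: t_def)
  have "4 + t > 0" using assms by (simp add: t_def)
  have "cstar (n + 2) r s n
      = - real n * (3 + r) * ((3 + t) * (4 + t)) / ((4 + t) * ((5 + t) * (6 + t)))"
    using False unfolding cstar_def arg
    by (simp add: eval_nat_numeral pochhammer_Suc algebra_simps)
  also have "\<dots> = - real n * (3 + r) * (3 + t) / ((5 + t) * (6 + t))"
    using \<open>4 + t > 0\<close> by simp
  finally show ?thesis by (simp add: t_def add.assoc)
qed

lemma cstar_last: "cstar d r s d = - real d * (1 + r) / (2 + r + s)"
  by (simp add: cstar_def algebra_simps)

lemma second_last_balance_defect:
  fixes n :: nat and r s :: real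
  assumes "r + s > -2"
  defines "t \<equiv> r + s"
  shows "bstar (n + 2) r s n + cstar (n + 2) r s n - cstar (n + 2) r s (n + 2)
       = 2 * (r - s) * (t + 3) * (t + 5) * (2 * real n + t + 6)
           / ((2 + t) * (4 + t) * (5 + t) * (6 + t))"
proof -
  have nz: "2 + t \<noteq> 0" "4 + t \<noteq> 0" "5 + t \<noteq> 0" "6 + t \<noteq> 0"
    using assms by (auto simp: t_def)
  have common_denominator: "A / (a * b) + B / (b * c) - C / e
      = (A * e * c + B * e * a - C * a * b * c) / (e * a * b * c)"
    if "a \<noteq> 0" "b \<noteq> 0" "c \<noteq> 0" "e \<noteq> 0" for A B C a b c e :: real
    using that by (simp add: field_simps)
  have "bstar (n + 2) r s n + cstar (n + 2) r s n - cstar (n + 2) r s (n + 2)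
      = (-2 * (2 + s) * (real n + 5 + t)) / ((4 + t) * (5 + t))
        + (- real n * (3 + r) * (3 + t)) / ((5 + t) * (6 + t))
        - (- real (n + 2) * (1 + r)) / (2 + t)"
    unfolding bstar_second_last[OF assms(1)] cstar_second_last[OF assms(1)] cstar_last
    by (simp add: t_def add.assoc)
  also have "\<dots> = (-2 * (2 + s) * (real n + 5 + t) * (2 + t) * (6 + t)
        + (- real n * (3 + r) * (3 + t)) * (2 + t) * (4 + t)
        - (- real (n + 2) * (1 + r)) * (4 + t) * (5 + t) * (6 + t))
      / ((2 + t) * (4 + t) * (5 + t) * (6 + t))"
    by (rule common_denominator[OF nz(2,3,4,1)])
  also have "\<dots> = 2 * (r - s) * (t + 3) * (t + 5) * (2 * real n + t + 6)
           / ((2 + t) * (4 + t) * (5 + t) * (6 + t))"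
    unfolding t_def by (simp add: algebra_simps)
  finally show ?thesis .
qed

theorem lemma2p8:
  fixes d :: nat and r s :: real
  assumes "d \<ge> 2" and "r > -1" and "s > -1"
  shows "astar d r s (d - 2) + astar d r s (d - 1) = astar d r s (d - 1) + astar d r s d
         \<longleftrightarrow> r = s"
proof -
  obtain n where d: "d = n + 2"
    using assms(1) by (metis add.commute le_Suc_ex)
  have rs: "r + s > -2"
    using assms by simp
  have "bstar d r s d = 0"
    by (simp add: bstar_def)
  then have "astar d r s (d - 2) + astar d r s (d - 1) = astar d r s (d - 1) + astar d r s d
     \<longleftrightarrow> bstar (n + 2) r s n + cstar (n + 2) r s n = cstar (n + 2) r s (n + 2)"
    unfolding astar_def thetastar_def d by auto
  also have "\<dots> \<longleftrightarrow> r = s"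
    unfolding eq_iff_diff_eq_0[of "bstar (n + 2) r s n + cstar (n + 2) r s n"]
      second_last_balance_defect[OF rs] using rs by simp
  finally show ?thesis .
qed

end
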